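(* Let $P:\mathbb{R}^d\to\mathbb{R}$ be a positive homogeneous function and let $\widetilde P$ be a complex-valued function which is continuous on an open neighborhood of $0$ in $\mathbb{R}^d$. The following are equivalent: (1) $\widetilde P(\xi)=o(P(\xi))$ as $\xi\to0$; (2) for every $E\in\mathrm{Exp}(P)$, $\widetilde P$ is subhomogeneous with respect to $E$; (3) there exists $E\in\mathrm{Exp}(P)$ for which $\widetilde P$ is subhomogeneous with respect to $E$.
   Context: For $E\in\mathrm{End}(\mathbb{R}^d)$, $t>0$, $t^E:=\exp(\log(t)E)$; $\{t^E\}$ is contracting if $\lim_{t\to0}\|t^E\|=0$. $P:\mathbb{R}^d\to\mathbb{C}$ is homogeneous w.r.t. $E$ if $P(t^E\xi)=tP(\xi)$ for all $t>0,\xi$; $\mathrm{Exp}(P)$ is the set of such $E$. A real $P$ is positive definite if $P\ge0$ and vanishes only at $0$. $P:\mathbb{R}^d\to\mathbb{R}$ is positive homogeneous if continuous, positive definite, $\mathrm{Exp}(P)\ne\emptyset$, and $S_P=\{P=1\}$ compact; then every $\{t^E\}$, $E\in\mathrm{Exp}(P)$, is contracting. Given a complex-valued $\widetilde P$ continuous on an open neighborhood $\mathcal U$ of $0$ and $E$ with $\{t^E\}$ contracting, $\widetilde P$ is subhomogeneous with respect to $E$ if for each $\epsilon>0$ and compact $K\subseteq\mathbb{R}^d$ there is $\tau>0$ with $|\widetilde P(t^E\xi)|\le\epsilon t$ for all $0<t<\tau$, $\xi\in K$. *)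

theory Defs
  imports "HOL-Analysis.Analysis" "HOL-Library.Landau_Symbols"
begin

text \<open>Endomorphisms of the finite-dimensional space 'a are represented as bounded
linear maps (every linear map on a Euclidean space is bounded).\<close>

primrec bl_pow :: "('a::real_normed_vector \<Rightarrow>\<^sub>L 'a) \<Rightarrow> nat \<Rightarrow> ('a \<Rightarrow>\<^sub>L 'a)" where
  "bl_pow E 0 = id_blinfun"
| "bl_pow E (Suc n) = E o\<^sub>L bl_pow E n"

definition bl_exp :: "('a::euclidean_space \<Rightarrow>\<^sub>L 'a) \<Rightarrow> ('a \<Rightarrow>\<^sub>L 'a)" where
  "bl_exp E = (\<Sum>n. (1 / fact n) *\<^sub>R bl_pow E n)"

definition tpow :: "real \<Rightarrow> ('a::euclidean_space \<Rightarrow>\<^sub>L 'a) \<Rightarrow> ('a \<Rightarrow>\<^sub>L 'a)" where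
  "tpow t E = bl_exp (ln t *\<^sub>R E)"

definition contracting :: "('a::euclidean_space \<Rightarrow>\<^sub>L 'a) \<Rightarrow> bool" where
  "contracting E \<longleftrightarrow> ((\<lambda>t. norm (tpow t E)) \<longlongrightarrow> 0) (at_right 0)"

definition homogeneous_wrt :: "('a::euclidean_space \<Rightarrow> 'b::real_normed_vector) \<Rightarrow> ('a \<Rightarrow>\<^sub>L 'a) \<Rightarrow> bool" where
  "homogeneous_wrt P E \<longleftrightarrow> (\<forall>t>0. \<forall>\<xi>. P (tpow t E \<xi>) = t *\<^sub>R P \<xi>)"

definition Exp :: "('a::euclidean_space \<Rightarrow> 'b::real_normed_vector) \<Rightarrow> ('a \<Rightarrow>\<^sub>L 'a) set" where
  "Exp P = {E. homogeneous_wrt P E}"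

definition positive_definite :: "('a::euclidean_space \<Rightarrow> real) \<Rightarrow> bool" where
  "positive_definite P \<longleftrightarrow> (\<forall>\<xi>. P \<xi> \<ge> 0) \<and> (\<forall>\<xi>. P \<xi> = 0 \<longrightarrow> \<xi> = 0)"

definition positive_homogeneous :: "('a::euclidean_space \<Rightarrow> real) \<Rightarrow> bool" where
  "positive_homogeneous P \<longleftrightarrow> continuous_on UNIV P \<and> positive_definite P
     \<and> Exp P \<noteq> {} \<and> compact {\<xi>. P \<xi> = 1}"

definition subhomogeneous :: "('a::euclidean_space \<Rightarrow> complex) \<Rightarrow> ('a \<Rightarrow>\<^sub>L 'a) \<Rightarrow> bool" where
  "subhomogeneous Pt E \<longleftrightarrow> contracting E \<and>
     (\<forall>\<epsilon>>0. \<forall>K. compact K \<longrightarrow>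
        (\<exists>\<tau>>0. \<forall>t. 0 < t \<and> t < \<tau> \<longrightarrow> (\<forall>\<xi>\<in>K. norm (Pt (tpow t E \<xi>)) \<le> \<epsilon> * t)))"

end

theory Submission
  imports Defs
begin

text \<open>Every small
\<open>\<xi> \<noteq> 0\<close> is then \<open>t\<^sup>E \<eta>\<close> with \<open>t = P \<xi>\<close> and \<open>\<eta>\<close> on the compact level set \<open>{P = 1}\<close>, so
subhomogeneity on that level set bounds \<open>|Pt \<xi>|\<close> by \<open>\<epsilon> P \<xi>\<close>. Conversely, \<open>|Pt| \<le> c P\<close> near \<open>0\<close>
turns into \<open>|Pt (t\<^sup>E \<xi>)| \<le> c t P \<xi>\<close> once \<open>t\<^sup>E\<close> has pushed the compact set into that
neighbourhood, which is what contraction provides; contraction itself follows from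
comparing the values of \<open>P\<close> on the unit sphere and on large balls.\<close>

lemma homogeneous_wrt_zero:
  assumes "homogeneous_wrt P E"
  shows "P 0 = 0"
proof -
  have "\<forall>\<xi>. P (tpow 2 E \<xi>) = 2 *\<^sub>R P \<xi>"
    using assms unfolding homogeneous_wrt_def by simp
  then have "P 0 = 2 *\<^sub>R P 0" by (drule_tac spec[of _ 0]) simp
  then show ?thesis by (simp add: scaleR_2)
qed

lemma surj_tpow_if_homogeneous:
  assumes hom: "homogeneous_wrt P E" and definite: "\<And>\<xi>. P \<xi> = 0 \<Longrightarrow> \<xi> = 0" and t: "t > 0"
  shows "surj (blinfun_apply (tpow t E))"
proof (rule linear_injective_imp_surjective)
  show "linear (blinfun_apply (tpow t E))" by (rule bounded_linear.linear[OF blinfun.bounded_linear_right])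
  have "\<xi> = 0" if "tpow t E \<xi> = 0" for \<xi>
  proof -
    have "t *\<^sub>R P \<xi> = P 0" using hom t that unfolding homogeneous_wrt_def by metis
    then show ?thesis using t definite homogeneous_wrt_zero[OF hom] by simp
  qed
  then show "inj (blinfun_apply (tpow t E))"
    by (simp add: linear_injective_0[OF bounded_linear.linear[OF blinfun.bounded_linear_right]])
qed simp

lemma norm_tpow_le_if_homogeneous:
  fixes P :: "'a::euclidean_space \<Rightarrow> real"
  assumes hom: "homogeneous_wrt P E"
    and sphere: "\<And>y. norm y = 1 \<Longrightarrow> m \<le> P y"
    and ball: "\<And>y. norm y \<le> r \<Longrightarrow> P y \<le> M"
    and r: "r > 0" and t: "t > 0" "t * M < m"
  shows "norm (tpow t E) \<le> 1 / r"
proof (rule norm_blinfun_bound)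
  fix x
  show "norm (tpow t E x) \<le> 1 / r * norm x"
  proof (cases "tpow t E x = 0")
    case False
    define z where "z = tpow t E x"
    have "norm (x /\<^sub>R norm z) > r"
    proof (rule ccontr)
      assume "\<not> norm (x /\<^sub>R norm z) > r"
      then have "t * P (x /\<^sub>R norm z) \<le> t * M" using ball t by simp
      moreover have "tpow t E (x /\<^sub>R norm z) = z /\<^sub>R norm z"
        by (simp add: z_def blinfun.scaleR_right)
      then have "t * P (x /\<^sub>R norm z) = P (z /\<^sub>R norm z)"
        using hom t unfolding homogeneous_wrt_def by (metis real_scaleR_def)
      moreover have "m \<le> P (z /\<^sub>R norm z)" using False by (intro sphere) (simp add: z_def)
      ultimately show False using t by linarith
    qed
    then show ?thesis
      using False r by (simp add: z_def field_simps)
  qed (use r in simp)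
qed (use r in simp)

lemma contracting_if_homogeneous:
  fixes P :: "'a::euclidean_space \<Rightarrow> real"
  assumes cont: "continuous_on UNIV P" and pd: "positive_definite P"
    and hom: "homogeneous_wrt P E"
  shows "contracting E"
proof -
  have "sphere (0::'a) 1 \<noteq> {}"
    using nonempty_Basis by auto
  from continuous_attains_inf[OF compact_sphere this continuous_on_subset[OF cont]]
  obtain x0 :: 'a where x0: "norm x0 = 1" and min: "\<And>y. norm y = 1 \<Longrightarrow> P x0 \<le> P y"
    by auto
  have m: "P x0 > 0"
    using pd x0 unfolding positive_definite_def by (metis less_eq_real_def norm_zero zero_neq_one)
  have small: "\<forall>\<^sub>F t in at_right 0. norm (tpow t E) \<le> \<epsilon>" if \<epsilon>: "\<epsilon> > 0" for \<epsilon>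
  proof -
    have "bounded (P ` cball 0 (1 / \<epsilon>))"
      by (intro compact_imp_bounded compact_continuous_image continuous_on_subset[OF cont]) auto
    then obtain M where M: "\<And>y. norm y \<le> 1 / \<epsilon> \<Longrightarrow> P y \<le> M"
      unfolding bounded_iff by (metis abs_le_D1 image_eqI mem_cball_0 real_norm_def)
    have "norm (tpow t E) \<le> \<epsilon>" if t: "0 < t" "t < P x0 / (\<bar>M\<bar> + 1)" for t
    proof -
      have "t * M \<le> t * (\<bar>M\<bar> + 1)" using t by (simp add: mult_left_mono)
      also have "\<dots> < P x0" using t by (simp add: pos_less_divide_eq)
      finally have "norm (tpow t E) \<le> 1 / (1 / \<epsilon>)"
        by (intro norm_tpow_le_if_homogeneous[OF hom min M]) (use t \<epsilon> in auto)
      then show ?thesis by simp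
    qed
    then show ?thesis
      unfolding eventually_at_right_field using m by (intro exI[of _ "P x0 / (\<bar>M\<bar> + 1)"]) auto
  qed
  have "\<forall>\<^sub>F t in at_right 0. dist (norm (tpow t E)) 0 < \<epsilon>" if "\<epsilon> > 0" for \<epsilon>
    using small[of "\<epsilon> / 2"] that by (auto elim: eventually_mono)
  then show ?thesis
    unfolding contracting_def by (rule tendstoI)
qed

lemma contracting_eventually_norm_less:
  assumes "contracting E" and "bounded K" and "\<delta> > 0"
  shows "\<forall>\<^sub>F t in at_right 0. \<forall>\<xi>\<in>K. norm (tpow t E \<xi>) < \<delta>"
proof -
  obtain B where B: "B > 0" "\<And>\<xi>. \<xi> \<in> K \<Longrightarrow> norm \<xi> \<le> B"
    using \<open>bounded K\<close> unfolding bounded_pos by blast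
  have "\<forall>\<^sub>F t in at_right 0. norm (tpow t E) < \<delta> / B"
    using \<open>contracting E\<close> \<open>\<delta> > 0\<close> B(1) unfolding contracting_def
    by (intro order_tendstoD(2)[of _ 0]) simp_all
  then show ?thesis
  proof (rule eventually_mono, intro ballI)
    fix t \<xi> assume t: "norm (tpow t E) < \<delta> / B" and "\<xi> \<in> K"
    have "norm (tpow t E \<xi>) \<le> norm (tpow t E) * norm \<xi>" by (rule norm_blinfun)
    also have "\<dots> \<le> norm (tpow t E) * B" using B(2)[OF \<open>\<xi> \<in> K\<close>] by (simp add: mult_left_mono)
    also have "\<dots> < \<delta>" using t B(1) by (simp add: pos_less_divide_eq)
    finally show "norm (tpow t E \<xi>) < \<delta>" .
  qed
qed

lemma smallo_at_imp_eq_zero: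
  fixes f :: "'a::{real_normed_vector, perfect_space} \<Rightarrow> 'b::real_normed_field"
  assumes "f \<in> o[at x](g)" and "(g \<longlongrightarrow> 0) (at x)" and "isCont f x"
  shows "f x = 0"
proof -
  have "\<forall>\<^sub>F y in at x. norm (f y) \<le> norm (g y)"
    using landau_o.smallD[OF assms(1), of 1] by simp
  then have "(f \<longlongrightarrow> 0) (at x)"
    by (rule Lim_null_comparison[OF _ tendsto_norm_zero[OF assms(2)]])
  moreover have "(f \<longlongrightarrow> f x) (at x)" using \<open>isCont f x\<close> by (simp add: isCont_def)
  ultimately show ?thesis using tendsto_unique[OF at_neq_bot] by metis
qed

lemma tendsto_zero_if_homogeneous:
  assumes "continuous_on UNIV P" and "homogeneous_wrt P E"
  shows "P \<midarrow>0\<rightarrow> 0"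
  using assms homogeneous_wrt_zero[OF assms(2)]
  by (metis continuous_on_def UNIV_I at_within_open open_UNIV)

lemma subhomogeneous_if_smallo:
  fixes P :: "'a::euclidean_space \<Rightarrow> real" and Pt :: "'a \<Rightarrow> complex"
  assumes o: "Pt \<in> o[at 0](\<lambda>\<xi>. complex_of_real (P \<xi>))" and "Pt 0 = 0"
    and cont: "continuous_on UNIV P" and hom: "homogeneous_wrt P E" and con: "contracting E"
  shows "subhomogeneous Pt E"
  unfolding subhomogeneous_def
proof (intro conjI con allI impI)
  fix \<epsilon> :: real and K :: "'a set"
  assume \<epsilon>: "\<epsilon> > 0" and K: "compact K"
  have "bounded (P ` K)"
    by (intro compact_imp_bounded compact_continuous_image[OF continuous_on_subset[OF cont subset_UNIV] K])
  then obtain B where B: "B > 0" "\<And>\<xi>. \<xi> \<in> K \<Longrightarrow> \<bar>P \<xi>\<bar> \<le> B"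
    unfolding bounded_pos by auto
  obtain \<delta> where \<delta>: "\<delta> > 0"
    and small: "\<And>x. x \<noteq> 0 \<Longrightarrow> norm x < \<delta> \<Longrightarrow> norm (Pt x) \<le> \<epsilon> / B * \<bar>P x\<bar>"
    using landau_o.smallD[OF o, of "\<epsilon> / B"] \<epsilon> B(1) unfolding eventually_at by auto
  have "\<forall>\<^sub>F t in at_right 0. \<forall>\<xi>\<in>K. norm (Pt (tpow t E \<xi>)) \<le> \<epsilon> * t"
    using contracting_eventually_norm_less[OF con compact_imp_bounded[OF K] \<delta>]
      eventually_at_right_less
  proof eventually_elim
    case (elim t)
    show ?case
    proof
      fix \<xi> assume "\<xi> \<in> K"
      show "norm (Pt (tpow t E \<xi>)) \<le> \<epsilon> * t"
      proof (cases "tpow t E \<xi> = 0")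
        case False
        have "norm (Pt (tpow t E \<xi>)) \<le> \<epsilon> / B * \<bar>P (tpow t E \<xi>)\<bar>"
          using small[OF False] elim \<open>\<xi> \<in> K\<close> by blast
        also have "\<dots> = \<epsilon> / B * t * \<bar>P \<xi>\<bar>"
          using hom elim unfolding homogeneous_wrt_def by (simp add: abs_mult)
        also have "\<dots> \<le> \<epsilon> / B * t * B"
          using B(2)[OF \<open>\<xi> \<in> K\<close>] \<epsilon> B(1) elim by (intro mult_left_mono) simp_all
        finally show ?thesis using B(1) by simp
      qed (use \<open>Pt 0 = 0\<close> \<epsilon> elim in simp)
    qed
  qed
  then show "\<exists>\<tau>>0. \<forall>t. 0 < t \<and> t < \<tau> \<longrightarrow> (\<forall>\<xi>\<in>K. norm (Pt (tpow t E \<xi>)) \<le> \<epsilon> * t)"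
    unfolding eventually_at_right_field by auto
qed

lemma smallo_if_subhomogeneous:
  fixes P :: "'a::euclidean_space \<Rightarrow> real" and Pt :: "'a \<Rightarrow> complex"
  assumes cont: "continuous_on UNIV P" and pd: "positive_definite P"
    and level: "compact {\<xi>. P \<xi> = 1}"
    and hom: "homogeneous_wrt P E" and sub: "subhomogeneous Pt E"
  shows "Pt \<in> o[at 0](\<lambda>\<xi>. complex_of_real (P \<xi>))"
proof (rule landau_o.smallI)
  fix c :: real assume "c > 0"
  then obtain \<tau> where "\<tau> > 0"
    and bound: "\<And>t \<eta>. 0 < t \<Longrightarrow> t < \<tau> \<Longrightarrow> P \<eta> = 1 \<Longrightarrow> norm (Pt (tpow t E \<eta>)) \<le> c * t"
    using sub level unfolding subhomogeneous_def by fastforce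
  have "\<forall>\<^sub>F x in at 0. P x < \<tau>"
    using tendsto_zero_if_homogeneous[OF cont hom] \<open>\<tau> > 0\<close> by (rule order_tendstoD(2))
  moreover have "\<forall>\<^sub>F x in at 0. x \<noteq> (0::'a)" by (rule eventually_neq_at_within)
  ultimately show "\<forall>\<^sub>F x in at 0. norm (Pt x) \<le> c * norm (complex_of_real (P x))"
  proof eventually_elim
    case (elim x)
    have t: "P x > 0"
      using pd elim unfolding positive_definite_def by (metis less_eq_real_def)
    obtain \<eta> where \<eta>: "tpow (P x) E \<eta> = x"
      using surj_tpow_if_homogeneous[OF hom _ t] pd unfolding positive_definite_def by (metis surjD)
    have "P x * P \<eta> = P x * 1"
      using hom t \<eta> unfolding homogeneous_wrt_def by (metis mult.right_neutral real_scaleR_def)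
    then have "P \<eta> = 1" using t by simp
    then have "norm (Pt x) \<le> c * P x" using bound[OF t elim(1) \<open>P \<eta> = 1\<close>] \<eta> by simp
    then show ?case using t by simp
  qed
qed

theorem mainTheorem3:
  fixes P :: "'a::euclidean_space \<Rightarrow> real"
    and Pt :: "'a \<Rightarrow> complex"
    and U :: "'a set"
  assumes "positive_homogeneous P"
    and "open U" and "0 \<in> U"
    and "continuous_on U Pt"
  shows "(Pt \<in> o[at 0](\<lambda>\<xi>. complex_of_real (P \<xi>)) \<longleftrightarrow> (\<forall>E\<in>Exp P. subhomogeneous Pt E))
       \<and> ((\<forall>E\<in>Exp P. subhomogeneous Pt E) \<longleftrightarrow> (\<exists>E\<in>Exp P. subhomogeneous Pt E))"
proof -
  have cont: "continuous_on UNIV P" and pd: "positive_definite P"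
    and "Exp P \<noteq> {}" and level: "compact {\<xi>. P \<xi> = 1}"
    using assms(1) unfolding positive_homogeneous_def by auto
  obtain E0 where "E0 \<in> Exp P" using \<open>Exp P \<noteq> {}\<close> by blast
  then have "P \<midarrow>0\<rightarrow> 0"
    by (intro tendsto_zero_if_homogeneous[OF cont]) (simp add: Exp_def)
  have "isCont Pt 0" using assms(2-4) continuous_on_eq_continuous_at by blast
  have "subhomogeneous Pt E" if "Pt \<in> o[at 0](\<lambda>\<xi>. complex_of_real (P \<xi>))" "E \<in> Exp P" for E
  proof -
    have "Pt 0 = 0"
      by (rule smallo_at_imp_eq_zero[OF that(1) tendsto_of_real[OF \<open>P \<midarrow>0\<rightarrow> 0\<close>, simplified] \<open>isCont Pt 0\<close>])
    moreover have "homogeneous_wrt P E" using that(2) by (simp add: Exp_def)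
    ultimately show ?thesis
      using subhomogeneous_if_smallo[OF that(1) _ cont] contracting_if_homogeneous[OF cont pd] by blast
  qed
  moreover have "Pt \<in> o[at 0](\<lambda>\<xi>. complex_of_real (P \<xi>))"
    if "E \<in> Exp P" "subhomogeneous Pt E" for E
    using smallo_if_subhomogeneous[OF cont pd level] that by (simp add: Exp_def)
  ultimately show ?thesis using \<open>Exp P \<noteq> {}\<close> by blast
qed

end
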